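(* The singular braid monoid $SB_n$ has a presentation with generators $a_{ts},a_{ts}^{-1}$ for $1\le s<t\le n$ and $b_{qp}$ for $1\le p<q\le n$, and relations $$\begin{aligned} &a_{ts}a_{rq}=a_{rq}a_{ts}\ \text{ for } (t-r)(t-q)(s-r)(s-q)>0,\\ &a_{ts}a_{sr}=a_{tr}a_{ts}=a_{sr}a_{tr}\ \text{ for } 1\le r<s<t\le n,\\ &a_{ts}a_{ts}^{-1}=a_{ts}^{-1}a_{ts}=1\ \text{ for } 1\le s<t\le n,\\ &a_{ts}b_{rq}=b_{rq}a_{ts}\ \text{ for } (t-r)(t-q)(s-r)(s-q)>0,\\ &a_{ts}b_{ts}=b_{ts}a_{ts}\ \text{ for } 1\le s<t\le n,\\ &a_{ts}b_{sr}=b_{tr}a_{ts},\quad a_{sr}b_{tr}=b_{ts}a_{sr},\quad a_{tr}b_{ts}=b_{sr}a_{tr}\ \text{ for } 1\le r<s<t\le n,\\ &b_{ts}b_{rq}=b_{rq}b_{ts}\ \text{ for } (t-r)(t-q)(s-r)(s-q)>0, \end{aligned}$$ where the generators correspond to the following elements of $SB_n$: $a_{ts}=(\sigma_{t-1}\cdots\sigma_{s+1})\sigma_s(\sigma_{s+1}^{-1}\cdots\sigma_{t-1}^{-1})$, $a_{ts}^{-1}=(\sigma_{t-1}\cdots\sigma_{s+1})\sigma_s^{-1}(\sigma_{s+1}^{-1}\cdots\sigma_{t-1}^{-1})$, $b_{qp}=(\sigma_{q-1}\cdots\sigma_{p+1})x_p(\sigma_{p+1}^{-1}\cdots\sigma_{q-1}^{-1})$.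 That is, the assignment of these elements to the generators induces an isomorphism from the monoid so presented onto $SB_n$.
   Context: Fix $n\ge 2$. $SB_n$ is the monoid with generators $\sigma_i,\sigma_i^{-1},x_i$ ($i=1,\dots,n-1$) and relations: $\sigma_i\sigma_j=\sigma_j\sigma_i$ and $x_ix_j=x_jx_i$ if $|i-j|>1$; $x_i\sigma_j=\sigma_jx_i$ if $|i-j|\ne1$; $\sigma_i\sigma_{i+1}\sigma_i=\sigma_{i+1}\sigma_i\sigma_{i+1}$; $\sigma_i\sigma_{i+1}x_i=x_{i+1}\sigma_i\sigma_{i+1}$; $\sigma_{i+1}\sigma_ix_{i+1}=x_i\sigma_{i+1}\sigma_i$; $\sigma_i\sigma_i^{-1}=\sigma_i^{-1}\sigma_i=1$. *)

theory Defs
  imports Main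
begin

text \<open>Monoid presentations: words are lists of generators; the presented monoid is the
  set of words modulo the monoid congruence generated by a set of relations R
  (pairs of words).\<close>

inductive eqv :: "('g list \<times> 'g list) set \<Rightarrow> 'g list \<Rightarrow> 'g list \<Rightarrow> bool" for R where
  refl: "eqv R w w"
| sym: "eqv R w v \<Longrightarrow> eqv R v w"
| trans: "eqv R u v \<Longrightarrow> eqv R v w \<Longrightarrow> eqv R u w"
| rel: "(x, y) \<in> R \<Longrightarrow> eqv R (u @ x @ v) (u @ y @ v)"

datatype sbgen = Sig nat | SigInv nat | X nat

definition sb_gens :: "nat \<Rightarrow> sbgen set" where
  "sb_gens n = {Sig i | i. 1 \<le> i \<and> i < n} \<union> {SigInv i | i. 1 \<le> i \<and> i < n}
              \<union> {X i | i. 1 \<le> i \<and> i < n}"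

definition sb_rels :: "nat \<Rightarrow> (sbgen list \<times> sbgen list) set" where
  "sb_rels n =
     {([Sig i, Sig j], [Sig j, Sig i]) | i j. 1 \<le> i \<and> i < n \<and> 1 \<le> j \<and> j < n \<and> \<bar>int i - int j\<bar> > 1}
   \<union> {([X i, X j], [X j, X i]) | i j. 1 \<le> i \<and> i < n \<and> 1 \<le> j \<and> j < n \<and> \<bar>int i - int j\<bar> > 1}
   \<union> {([X i, Sig j], [Sig j, X i]) | i j. 1 \<le> i \<and> i < n \<and> 1 \<le> j \<and> j < n \<and> \<bar>int i - int j\<bar> \<noteq> 1}
   \<union> {([Sig i, Sig (i+1), Sig i], [Sig (i+1), Sig i, Sig (i+1)]) | i. 1 \<le> i \<and> i + 1 < n}
   \<union> {([Sig i, Sig (i+1), X i], [X (i+1), Sig i, Sig (i+1)]) | i. 1 \<le> i \<and> i + 1 < n}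
   \<union> {([Sig (i+1), Sig i, X (i+1)], [X i, Sig (i+1), Sig i]) | i. 1 \<le> i \<and> i + 1 < n}
   \<union> {([Sig i, SigInv i], []) | i. 1 \<le> i \<and> i < n}
   \<union> {([SigInv i, Sig i], []) | i. 1 \<le> i \<and> i < n}"

datatype bkgen = A nat nat | Ainv nat nat | B nat nat

definition bk_gens :: "nat \<Rightarrow> bkgen set" where
  "bk_gens n = {A t s | t s. 1 \<le> s \<and> s < t \<and> t \<le> n}
              \<union> {Ainv t s | t s. 1 \<le> s \<and> s < t \<and> t \<le> n}
              \<union> {B t s | t s. 1 \<le> s \<and> s < t \<and> t \<le> n}"

definition sep :: "nat \<Rightarrow> nat \<Rightarrow> nat \<Rightarrow> nat \<Rightarrow> bool" where
  "sep t s r q \<longleftrightarrow> (int t - int r) * (int t - int q) * (int s - int r) * (int s - int q) > 0"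

definition pr :: "nat \<Rightarrow> nat \<Rightarrow> nat \<Rightarrow> bool" where
  "pr n t s \<longleftrightarrow> 1 \<le> s \<and> s < t \<and> t \<le> n"

definition bk_rels :: "nat \<Rightarrow> (bkgen list \<times> bkgen list) set" where
  "bk_rels n =
     {([A t s, A r q], [A r q, A t s]) | t s r q. pr n t s \<and> pr n r q \<and> sep t s r q}
   \<union> {([A t s, A s r], [A t r, A t s]) | t s r. 1 \<le> r \<and> r < s \<and> s < t \<and> t \<le> n}
   \<union> {([A t r, A t s], [A s r, A t r]) | t s r. 1 \<le> r \<and> r < s \<and> s < t \<and> t \<le> n}
   \<union> {([A t s, Ainv t s], []) | t s. pr n t s}
   \<union> {([Ainv t s, A t s], []) | t s. pr n t s}
   \<union> {([A t s, B r q], [B r q, A t s]) | t s r q. pr n t s \<and> pr n r q \<and> sep t s r q}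
   \<union> {([A t s, B t s], [B t s, A t s]) | t s. pr n t s}
   \<union> {([A t s, B s r], [B t r, A t s]) | t s r. 1 \<le> r \<and> r < s \<and> s < t \<and> t \<le> n}
   \<union> {([A s r, B t r], [B t s, A s r]) | t s r. 1 \<le> r \<and> r < s \<and> s < t \<and> t \<le> n}
   \<union> {([A t r, B t s], [B s r, A t r]) | t s r. 1 \<le> r \<and> r < s \<and> s < t \<and> t \<le> n}
   \<union> {([B t s, B r q], [B r q, B t s]) | t s r q. pr n t s \<and> pr n r q \<and> sep t s r q}"

definition conj_word :: "nat \<Rightarrow> nat \<Rightarrow> sbgen \<Rightarrow> sbgen list" where
  "conj_word t s c = map Sig (rev [s+1..<t]) @ [c] @ map SigInv [s+1..<t]"

fun img :: "bkgen \<Rightarrow> sbgen list" where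
  "img (A t s) = conj_word t s (Sig s)"
| "img (Ainv t s) = conj_word t s (SigInv s)"
| "img (B q p) = conj_word q p (X p)"

definition phi :: "bkgen list \<Rightarrow> sbgen list" where
  "phi w = concat (map img w)"

end

theory Submission
  imports Defs
begin

text \<open>
  The assignment sigma_i |-> a_(i+1,i), sigma_i^-1 |-> a_(i+1,i)^-1, x_i |-> b_(i+1,i) is inverse
  to phi: phi sends these generators back to sigma_i, sigma_i^-1, x_i, and conversely a_(k+1,k)
  conjugates a_ks and b_ks into a_(k+1,s) and b_(k+1,s), so the new generators are recovered.
  It remains to see that both assignments respect the relations. Everything is phrased in terms
  of conjugation p x = y p. Words on far apart strands commute, and the relations
  sigma_i sigma_(i+1) c_i = c_(i+1) sigma_i sigma_(i+1) and
  sigma_(i+1) sigma_i c_(i+1) = c_i sigma_(i+1) sigma_i for c = sigma, x (below: c \<in> {Sig, X})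
  show that conjugation by sigma_(t-1) ... sigma_(s+1) lowers by one all indices strictly between
  s + 1 and t. In this way the relations a_sr c_tr = c_ts a_sr and a_tr c_ts = c_sr a_tr reduce
  to the case t = s + 1, which follows from the second expression
  a_(m+1,r) = (sigma_(m-1) ... sigma_r)^-1 sigma_m (sigma_(m-1) ... sigma_r) of a band generator.
\<close>

section \<open>Words modulo relations, and conjugation\<close>

declare eqv.refl [intro, simp] eqv.trans [trans]

lemma eqv_of_rel: "(x, y) \<in> R \<Longrightarrow> eqv R x y"
  using eqv.rel [of x y R "[]" "[]"] by simp

lemma eqv_in_context: "eqv R x y \<Longrightarrow> eqv R (u @ x @ v) (u @ y @ v)"
proof (induction rule: eqv.induct)
  case (rel x y u' v')
  then show ?case using eqv.rel [of x y R "u @ u'" "v' @ v"] by simp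
qed (blast intro: eqv.intros)+

lemma eqv_append_left: "eqv R x y \<Longrightarrow> eqv R (u @ x) (u @ y)"
  using eqv_in_context [of R x y u "[]"] by simp

lemma eqv_append_right: "eqv R x y \<Longrightarrow> eqv R (x @ v) (y @ v)"
  using eqv_in_context [of R x y "[]" v] by simp

lemma eqv_append: "eqv R x y \<Longrightarrow> eqv R x' y' \<Longrightarrow> eqv R (x @ x') (y @ y')"
  by (metis eqv.trans eqv_append_left eqv_append_right)

lemma eqv_hom:
  assumes "\<And>u v. h (u @ v) = h u @ h v"
    and "\<And>x y. (x, y) \<in> R \<Longrightarrow> eqv S (h x) (h y)"
    and "eqv R u v"
  shows "eqv S (h u) (h v)"
  using assms(3)
proof (induction rule: eqv.induct)
  case (rel x y u v)
  then show ?case by (simp add: assms(1,2) eqv_in_context)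
qed (blast intro: eqv.intros)+

lemma eqv_iso_of_inverse_homs:
  assumes f_hom: "\<And>u v. eqv R u v \<Longrightarrow> eqv S (f u) (f v)"
    and g_hom: "\<And>u v. eqv S u v \<Longrightarrow> eqv R (g u) (g v)"
    and g_f: "\<And>w. P w \<Longrightarrow> eqv R (g (f w)) w"
    and f_g: "\<And>u. Q u \<Longrightarrow> f (g u) = u"
    and g_into: "\<And>u. Q u \<Longrightarrow> P (g u)"
  shows "(\<forall>w1 w2. P w1 \<longrightarrow> P w2 \<longrightarrow> (eqv R w1 w2 \<longleftrightarrow> eqv S (f w1) (f w2)))
       \<and> (\<forall>u. Q u \<longrightarrow> (\<exists>w. P w \<and> eqv S (f w) u))"
proof (intro conjI allI impI iffI)
  fix w1 w2 assume "P w1" "P w2" "eqv S (f w1) (f w2)"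
  then show "eqv R w1 w2"
    by (metis eqv.sym eqv.trans g_f g_hom)
next
  fix u assume "Q u"
  then show "\<exists>w. P w \<and> eqv S (f w) u"
    using f_g g_into by (intro exI [of _ "g u"]) auto
qed (use f_hom in auto)

definition conjugates ::
    "('g list \<times> 'g list) set \<Rightarrow> 'g list \<Rightarrow> 'g list \<Rightarrow> 'g list \<Rightarrow> bool" where
  "conjugates R p x y \<longleftrightarrow> eqv R (p @ x) (y @ p)"

abbreviation commute :: "('g list \<times> 'g list) set \<Rightarrow> 'g list \<Rightarrow> 'g list \<Rightarrow> bool" where
  "commute R u v \<equiv> conjugates R u v v"

lemma conjugates_by_Nil: "conjugates R [] x x"
  by (simp add: conjugates_def)

lemma conjugates_Nil: "conjugates R p [] []"
  by (simp add: conjugates_def)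

lemma conjugates_compose:
  "conjugates R p x y \<Longrightarrow> conjugates R q y z \<Longrightarrow> conjugates R (q @ p) x z"
  unfolding conjugates_def
  by (metis append.assoc eqv.trans eqv_append_left eqv_append_right)

lemma conjugates_append:
  assumes "conjugates R p x y" "conjugates R p x' y'"
  shows "conjugates R p (x @ x') (y @ y')"
proof -
  have "eqv R (p @ x @ x') (y @ p @ x')"
    using assms(1) eqv_append_right unfolding conjugates_def by fastforce
  also have "eqv R \<dots> (y @ y' @ p)"
    using assms(2) eqv_append_left unfolding conjugates_def by fastforce
  finally show ?thesis by (simp add: conjugates_def)
qed

lemma conjugates_eqv:
  assumes "conjugates R p x y" "eqv R p p'" "eqv R x x'" "eqv R y y'"
  shows "conjugates R p' x' y'"
  using assms unfolding conjugates_def by (metis eqv.sym eqv.trans eqv_append)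

lemma commute_sym: "commute R u v \<Longrightarrow> commute R v u"
  by (simp add: conjugates_def eqv.sym)

lemma commute_of_letters:
  assumes "\<And>e f. e \<in> set u \<Longrightarrow> f \<in> set v \<Longrightarrow> commute R [e] [f]"
  shows "commute R u v"
proof -
  have letter: "commute R u [f]" if "f \<in> set v" for f
    using assms that
  proof (induction u)
    case (Cons e u)
    then show ?case using conjugates_compose [of R u "[f]" "[f]" "[e]"] by simp
  qed (rule conjugates_by_Nil)
  show ?thesis
    using letter
  proof (induction v)
    case (Cons f v)
    then show ?case using conjugates_append [of R u "[f]" "[f]" v v] by simp
  qed (rule conjugates_Nil)
qed

definition inverse_words :: "('g list \<times> 'g list) set \<Rightarrow> 'g list \<Rightarrow> 'g list \<Rightarrow> bool" where
  "inverse_words R p p' \<longleftrightarrow> eqv R (p @ p') [] \<and> eqv R (p' @ p) []"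

lemma inverse_words_Nil: "inverse_words R [] []"
  by (simp add: inverse_words_def)

lemma inverse_words_sym: "inverse_words R p p' \<Longrightarrow> inverse_words R p' p"
  by (simp add: inverse_words_def)

lemma inverse_words_append:
  assumes "inverse_words R p p'" "inverse_words R q q'"
  shows "inverse_words R (p @ q) (q' @ p')"
proof -
  have "eqv R (p @ q @ q' @ p') (p @ p')" "eqv R (q' @ p' @ p @ q) (q' @ q)"
    using assms eqv_in_context [of R "q @ q'" "[]" p p'] eqv_in_context [of R "p' @ p" "[]" q' q]
    by (simp_all add: inverse_words_def)
  then show ?thesis
    using assms by (auto simp: inverse_words_def intro: eqv.trans)
qed

lemma conjugates_by_invertible:
  "inverse_words R p p' \<Longrightarrow> conjugates R p x (p @ x @ p')"
  unfolding conjugates_def inverse_words_def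
  using eqv_in_context [of R "p' @ p" "[]" "p @ x" "[]"] by (simp add: eqv.sym)

lemma conjugates_absorb:
  assumes "conjugates R (p @ q) x y" "inverse_words R q q'"
  shows "conjugates R p (q @ x @ q') y"
proof -
  have "eqv R (p @ q @ x @ q') (y @ p @ q @ q')"
    using eqv_append_right [OF assms(1) [unfolded conjugates_def], of q'] by simp
  also have "eqv R \<dots> (y @ p)"
    using assms(2) eqv_in_context [of R "q @ q'" "[]" "y @ p" "[]"] by (simp add: inverse_words_def)
  finally show ?thesis by (simp add: conjugates_def)
qed

lemma eqv_conj_of_conjugates:
  "conjugates R p x y \<Longrightarrow> inverse_words R p p' \<Longrightarrow> eqv R (p @ x @ p') y"
  using conjugates_absorb [of R "[]" p x y p'] by (simp add: conjugates_def)

lemma conjugates_by_inverse: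
  assumes "conjugates R p x y" "inverse_words R p p'"
  shows "conjugates R p' y x"
proof -
  have "eqv R (p' @ y) (p' @ p @ x @ p')"
    using eqv_append_left [OF eqv_conj_of_conjugates [OF assms], of p'] by (simp add: eqv.sym)
  also have "eqv R \<dots> (x @ p')"
    using assms(2) eqv_in_context [of R "p' @ p" "[]" "[]" "x @ p'"] by (simp add: inverse_words_def)
  finally show ?thesis by (simp add: conjugates_def)
qed

lemma conjugates_inverse_words:
  assumes "conjugates R p x y" "inverse_words R x x'" "inverse_words R y y'"
  shows "conjugates R p x' y'"
proof -
  have "eqv R (p @ x') (y' @ y @ p @ x')"
    using assms(3) eqv_in_context [of R "y' @ y" "[]" "[]" "p @ x'"]
    by (simp add: inverse_words_def eqv.sym)
  also have "eqv R \<dots> (y' @ p @ x @ x')"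
    using assms(1) eqv_in_context [of R "y @ p" "p @ x" y' x'] by (simp add: conjugates_def eqv.sym)
  also have "eqv R \<dots> (y' @ p)"
    using assms(2) eqv_in_context [of R "x @ x'" "[]" "y' @ p" "[]"] by (simp add: inverse_words_def)
  finally show ?thesis by (simp add: conjugates_def)
qed

section \<open>Consequences of the defining relations of SB_n\<close>

lemma sb_sigma_inverse: "1 \<le> i \<Longrightarrow> i < n \<Longrightarrow> inverse_words (sb_rels n) [Sig i] [SigInv i]"
  by (auto simp: inverse_words_def sb_rels_def intro!: eqv_of_rel)

lemma sb_positive_commute:
  assumes "e \<in> {Sig i, X i}" "f \<in> {Sig j, X j}" "1 \<le> i" "i < n" "1 \<le> j" "j < n"
    and "i + 2 \<le> j \<or> j + 2 \<le> i \<or> (i = j \<and> f = Sig j)"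
  shows "commute (sb_rels n) [e] [f]"
proof -
  have "([e, f], [f, e]) \<in> sb_rels n \<or> ([f, e], [e, f]) \<in> sb_rels n \<or> e = f"
    using assms by (auto simp: sb_rels_def)
  then show ?thesis
    unfolding conjugates_def by (auto intro: eqv_of_rel eqv.sym)
qed

lemma sb_braid:
  "c \<in> {Sig, X} \<Longrightarrow> 1 \<le> i \<Longrightarrow> i + 1 < n \<Longrightarrow>
    conjugates (sb_rels n) [Sig i, Sig (i + 1)] [c i] [c (i + 1)]"
  by (auto simp: conjugates_def sb_rels_def intro!: eqv_of_rel)

lemma sb_braid_down:
  "c \<in> {Sig, X} \<Longrightarrow> 1 \<le> i \<Longrightarrow> i + 1 < n \<Longrightarrow>
    conjugates (sb_rels n) [Sig (i + 1), Sig i] [c (i + 1)] [c i]"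
  unfolding conjugates_def
  by (auto simp: sb_rels_def intro: eqv_of_rel eqv.sym [OF eqv_of_rel])

lemma sb_braid_conjugate:
  assumes "c \<in> {Sig, X}" "1 \<le> i" "i + 1 < n"
  shows "conjugates (sb_rels n) [Sig i] [Sig (i + 1), c i, SigInv (i + 1)] [c (i + 1)]"
proof -
  have "conjugates (sb_rels n) ([Sig i] @ [Sig (i + 1)]) [c i] [c (i + 1)]"
    using sb_braid [OF assms] by simp
  from conjugates_absorb [OF this sb_sigma_inverse] show ?thesis
    using assms by simp
qed

lemma sb_braid_down_conjugate:
  assumes "c \<in> {Sig, X}" "1 \<le> i" "i + 1 < n"
  shows "conjugates (sb_rels n) [Sig (i + 1), Sig i, SigInv (i + 1)] [c (i + 1)] [c i]"
proof -
  have "commute (sb_rels n) [Sig (i + 1)] [c (i + 1)]"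
    using assms by (intro commute_sym [OF sb_positive_commute]) auto
  then have "commute (sb_rels n) [SigInv (i + 1)] [c (i + 1)]"
    using conjugates_by_inverse [OF _ sb_sigma_inverse [of "i + 1" n]] assms by simp
  from conjugates_compose [OF this sb_braid_down [OF assms]] show ?thesis by simp
qed

fun idx :: "sbgen \<Rightarrow> nat" where
  "idx (Sig i) = i"
| "idx (SigInv i) = i"
| "idx (X i) = i"

lemma sb_letters_commute:
  assumes "1 \<le> idx e" "idx e < n" "1 \<le> idx f" "idx f < n"
    and "idx e + 2 \<le> idx f \<or> idx f + 2 \<le> idx e"
  shows "commute (sb_rels n) [e] [f]"
proof -
  have positive: "commute (sb_rels n) [e'] [f]" if "e' \<in> {Sig (idx e), X (idx e)}" for e'
  proof (cases f)
    case (SigInv j)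
    have "commute (sb_rels n) [e'] [Sig j]"
      using assms that SigInv by (intro sb_positive_commute [where i = "idx e" and j = j]) auto
    then show ?thesis
      using assms SigInv sb_sigma_inverse by (auto intro: conjugates_inverse_words)
  qed (use assms that in \<open>auto intro: sb_positive_commute [where i = "idx e"]\<close>)
  show ?thesis
  proof (cases e)
    case (SigInv i)
    then show ?thesis
      using positive [of "Sig i"] assms sb_sigma_inverse [of i n]
      by (auto intro: conjugates_by_inverse commute_sym)
  qed (use positive in auto)
qed

definition indices_in :: "nat \<Rightarrow> nat \<Rightarrow> sbgen list \<Rightarrow> bool" where
  "indices_in a b w \<longleftrightarrow> (\<forall>e\<in>set w. idx e \<in> {a..<b})"

lemma indices_in_simps [simp]:
  "indices_in a b []"
  "indices_in a b (e # w) \<longleftrightarrow> idx e \<in> {a..<b} \<and> indices_in a b w"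
  "indices_in a b (u @ w) \<longleftrightarrow> indices_in a b u \<and> indices_in a b w"
  by (auto simp: indices_in_def)

lemma indices_in_mono: "indices_in a b w \<Longrightarrow> a' \<le> a \<Longrightarrow> b \<le> b' \<Longrightarrow> indices_in a' b' w"
  by (auto simp: indices_in_def)

lemma sb_separated_commute:
  assumes "indices_in a b u" "indices_in c d v" "b < c \<or> d < a"
    and "1 \<le> a" "1 \<le> c" "b \<le> n" "d \<le> n"
  shows "commute (sb_rels n) u v"
proof (rule commute_of_letters)
  fix e f assume "e \<in> set u" "f \<in> set v"
  with assms have "idx e \<in> {a..<b}" "idx f \<in> {c..<d}"
    by (auto simp: indices_in_def)
  with assms show "commute (sb_rels n) [e] [f]"
    by (intro sb_letters_commute) auto
qed

section \<open>Runs of sigmas and the words conj_word\<close>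

lemma upt_split: "i \<le> j \<Longrightarrow> j \<le> k \<Longrightarrow> [i..<k] = [i..<j] @ [j..<k]"
  using upt_add_eq_append [of i j "k - j"] by simp

definition sig_run :: "nat \<Rightarrow> nat \<Rightarrow> sbgen list" where
  "sig_run i j = map Sig (rev [i..<j])"

definition sig_run_inv :: "nat \<Rightarrow> nat \<Rightarrow> sbgen list" where
  "sig_run_inv i j = map SigInv [i..<j]"

lemma sig_run_Suc: "i \<le> j \<Longrightarrow> sig_run i (Suc j) = Sig j # sig_run i j"
  by (simp add: sig_run_def)

lemma sig_run_inv_Suc: "i \<le> j \<Longrightarrow> sig_run_inv i (Suc j) = sig_run_inv i j @ [SigInv j]"
  by (simp add: sig_run_inv_def)

lemma sig_run_append: "i \<le> j \<Longrightarrow> j \<le> k \<Longrightarrow> sig_run j k @ sig_run i j = sig_run i k"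
  by (simp add: sig_run_def upt_split [of i j k])

lemma sig_run_inv_append:
  "i \<le> j \<Longrightarrow> j \<le> k \<Longrightarrow> sig_run_inv i j @ sig_run_inv j k = sig_run_inv i k"
  by (simp add: sig_run_inv_def upt_split [of i j k])

lemma indices_in_sig_run [simp]: "indices_in i j (sig_run i j)" "indices_in i j (sig_run_inv i j)"
  by (auto simp: indices_in_def sig_run_def sig_run_inv_def)

lemma sig_run_inverse:
  "1 \<le> i \<Longrightarrow> j \<le> n \<Longrightarrow> inverse_words (sb_rels n) (sig_run i j) (sig_run_inv i j)"
proof (induction j)
  case 0
  then show ?case by (simp add: sig_run_def sig_run_inv_def inverse_words_Nil)
next
  case (Suc j)
  show ?case
  proof (cases "i \<le> j")
    case True
    then show ?thesis
      using Suc inverse_words_append [OF sb_sigma_inverse [of j n]]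
      by (simp add: sig_run_Suc sig_run_inv_Suc)
  next
    case False
    then show ?thesis by (simp add: sig_run_def sig_run_inv_def inverse_words_Nil)
  qed
qed

lemma conj_word_sig_run: "conj_word t s e = sig_run (Suc s) t @ [e] @ sig_run_inv (Suc s) t"
  by (simp add: conj_word_def sig_run_def sig_run_inv_def)

lemma conj_word_Suc: "s < t \<Longrightarrow> conj_word (Suc t) s e = [Sig t] @ conj_word t s e @ [SigInv t]"
  by (simp add: conj_word_def)

lemma conj_word_split:
  assumes "r < s" "s \<le> t"
  shows "conj_word t r e = sig_run s t @ conj_word s r e @ sig_run_inv s t"
  using assms sig_run_append [of "Suc r" s t, symmetric]
    sig_run_inv_append [of "Suc r" s t, symmetric]
  by (simp add: conj_word_sig_run)

lemma indices_in_conj_word: "idx e = s \<Longrightarrow> s < t \<Longrightarrow> indices_in s t (conj_word t s e)"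
  by (auto simp: indices_in_def conj_word_def)

lemma conjugates_to_conj_word:
  "t \<le> n \<Longrightarrow> conjugates (sb_rels n) (sig_run (Suc s) t) [e] (conj_word t s e)"
  unfolding conj_word_sig_run by (rule conjugates_by_invertible [OF sig_run_inverse]) simp_all

lemma conj_word_append:
  assumes "t \<le> n"
  shows "eqv (sb_rels n) (conj_word t s e @ conj_word t s f)
    (sig_run (Suc s) t @ [e, f] @ sig_run_inv (Suc s) t)"
proof -
  have "eqv (sb_rels n) (sig_run_inv (Suc s) t @ sig_run (Suc s) t) []"
    using assms sig_run_inverse [of "Suc s" t n] by (simp add: inverse_words_def)
  from eqv_in_context [OF this, of "sig_run (Suc s) t @ [e]" "f # sig_run_inv (Suc s) t"]
  show ?thesis by (simp add: conj_word_sig_run)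
qed

fun shift :: "sbgen \<Rightarrow> sbgen" where
  "shift (Sig i) = Sig (Suc i)"
| "shift (SigInv i) = SigInv (Suc i)"
| "shift (X i) = X (Suc i)"

lemma idx_shift [simp]: "idx (shift e) = Suc (idx e)"
  by (cases e) simp_all

lemma map_shift_conj_word: "map shift (conj_word t s e) = conj_word (Suc t) (Suc s) (shift e)"
proof -
  have "[Suc s + 1..<Suc t] = map Suc [s + 1..<t]"
    by (simp only: map_Suc_upt add_Suc)
  then show ?thesis
    by (simp add: conj_word_def rev_map [symmetric] comp_def del: upt_Suc)
qed

lemma sig_run_conjugates_shift_letter:
  assumes "Suc s \<le> idx e" "idx e + 2 \<le> t" "t \<le> n"
  shows "conjugates (sb_rels n) (sig_run (Suc s) t) [shift e] [e]"
proof -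
  define j where "j = idx e"
  have "sig_run (Suc s) t = sig_run j t @ sig_run (Suc s) j"
    using assms sig_run_append [of "Suc s" j t] by (simp add: j_def)
  also have "sig_run j t = sig_run (j + 2) t @ sig_run j (j + 2)"
    using assms sig_run_append [of j "j + 2" t] by (simp add: j_def)
  also have "sig_run j (j + 2) = [Sig (Suc j), Sig j]"
    by (simp add: sig_run_def)
  finally have run:
    "sig_run (Suc s) t = sig_run (j + 2) t @ [Sig (Suc j), Sig j] @ sig_run (Suc s) j"
    by simp
  have positive: "conjugates (sb_rels n) (sig_run (Suc s) t) [c (Suc j)] [c j]"
    if "c \<in> {Sig, X}" for c
  proof -
    have "commute (sb_rels n) (sig_run (Suc s) j) [c (Suc j)]"
      using assms that
      by (intro sb_separated_commute [where a = "Suc s" and b = j and c = "Suc j" and d = "j + 2"])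
        (auto simp: j_def)
    moreover have "conjugates (sb_rels n) [Sig (Suc j), Sig j] [c (Suc j)] [c j]"
      using assms that sb_braid_down [of c j n] by (simp add: j_def)
    moreover have "commute (sb_rels n) (sig_run (j + 2) t) [c j]"
      using assms that
      by (intro sb_separated_commute [where a = "j + 2" and b = t and c = j and d = "Suc j"])
        (auto simp: j_def)
    ultimately show ?thesis
      unfolding run by (metis append.assoc conjugates_compose)
  qed
  show ?thesis
  proof (cases e)
    case (SigInv i)
    then show ?thesis
      using positive [of Sig] assms sb_sigma_inverse [of i n] sb_sigma_inverse [of "Suc i" n]
      by (auto simp: j_def intro: conjugates_inverse_words)
  qed (use positive j_def in auto)
qed

lemma sig_run_conjugates_shift:
  assumes "indices_in (Suc s) (t - 1) w" "t \<le> n"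
  shows "conjugates (sb_rels n) (sig_run (Suc s) t) (map shift w) w"
  using assms
proof (induction w)
  case (Cons e w)
  then have "conjugates (sb_rels n) (sig_run (Suc s) t) ([shift e] @ map shift w) ([e] @ w)"
    by (intro conjugates_append sig_run_conjugates_shift_letter) auto
  then show ?case by simp
qed (simp add: conjugates_Nil)

lemma conjugates_conj_word_to_letter:
  assumes "c \<in> {Sig, X}" "1 \<le> r" "r \<le> m" "m < n"
  shows "conjugates (sb_rels n) (sig_run r m) (conj_word (Suc m) r (c r)) [c m]"
  using assms(3,4)
proof (induction m rule: dec_induct)
  case base
  then show ?case by (simp add: conj_word_def sig_run_def conjugates_by_Nil)
next
  case (step k)
  have "commute (sb_rels n) (sig_run r k) [Sig (Suc k)]"
    "commute (sb_rels n) (sig_run r k) [SigInv (Suc k)]"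
    using assms step
    by (auto intro!: sb_separated_commute [where a = r and b = k and c = "Suc k" and d = "Suc (Suc k)"])
  with step have "conjugates (sb_rels n) (sig_run r k)
      ([Sig (Suc k)] @ conj_word (Suc k) r (c r) @ [SigInv (Suc k)])
      ([Sig (Suc k)] @ [c k] @ [SigInv (Suc k)])"
    by (intro conjugates_append) auto
  moreover have "conjugates (sb_rels n) [Sig k] ([Sig (Suc k)] @ [c k] @ [SigInv (Suc k)]) [c (Suc k)]"
    using assms step sb_braid_conjugate [of c k n] by simp
  ultimately have "conjugates (sb_rels n) ([Sig k] @ sig_run r k)
      ([Sig (Suc k)] @ conj_word (Suc k) r (c r) @ [SigInv (Suc k)]) [c (Suc k)]"
    by (rule conjugates_compose)
  then show ?case
    using step by (simp add: conj_word_Suc sig_run_Suc)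
qed

lemma conj_word_eqv_alt:
  assumes "c \<in> {Sig, X}" "1 \<le> r" "r \<le> m" "m < n"
  shows "eqv (sb_rels n) (sig_run_inv r m @ [c m] @ sig_run r m) (conj_word (Suc m) r (c r))"
proof -
  have inv: "inverse_words (sb_rels n) (sig_run r m) (sig_run_inv r m)"
    using assms by (simp add: sig_run_inverse)
  from conjugates_by_inverse [OF conjugates_conj_word_to_letter [OF assms] inv]
  show ?thesis by (rule eqv_conj_of_conjugates [OF _ inverse_words_sym [OF inv]])
qed

section \<open>The map phi respects the relations\<close>

lemma sep_iff:
  assumes "s < t" "q < r"
  shows "sep t s r q \<longleftrightarrow> r < s \<or> t < q \<or> (s < q \<and> r < t) \<or> (q < s \<and> t < r)"
proof -
  define sign where "sign x = (int t - int x) * (int s - int x)" for x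
  have pos: "0 < sign x \<longleftrightarrow> x < s \<or> t < x" for x
    using assms(1) by (auto simp: sign_def zero_less_mult_iff)
  have neg: "sign x < 0 \<longleftrightarrow> s < x \<and> x < t" for x
    using assms(1) by (auto simp: sign_def mult_less_0_iff)
  have "sep t s r q \<longleftrightarrow> 0 < sign r * sign q"
    by (simp add: sep_def sign_def ac_simps)
  also have "\<dots> \<longleftrightarrow> (0 < sign r \<and> 0 < sign q) \<or> (sign r < 0 \<and> sign q < 0)"
    by (rule zero_less_mult_iff)
  finally show ?thesis
    unfolding pos neg using assms by auto
qed

lemma conj_word_commute_disjoint:
  assumes "idx e = s" "idx f = q" "1 \<le> q" "q < r" "r < s" "s < t" "t \<le> n"
  shows "commute (sb_rels n) (conj_word t s e) (conj_word r q f)"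
  using assms
  by (intro sb_separated_commute [where a = s and b = t and c = q and d = r])
    (auto simp: indices_in_conj_word)

lemma conj_word_commute_nested:
  assumes "idx e = s" "idx f = q" "1 \<le> s" "s < q" "q < r" "r < t" "t \<le> n"
  shows "commute (sb_rels n) (conj_word t s e) (conj_word r q f)"
proof -
  define H D D' where
    "H = conj_word r q f" and "D = sig_run (Suc s) t" and "D' = sig_run_inv (Suc s) t"
  have inv: "inverse_words (sb_rels n) D D'"
    using assms by (simp add: D_def D'_def sig_run_inverse)
  have "indices_in q r H"
    using assms by (simp add: H_def indices_in_conj_word)
  \<comment> \<open>conjugation by the inverse of D moves H one strand up, away from e\<close>
  then have D_shift: "conjugates (sb_rels n) D (map shift H) H"
    using assms unfolding D_def by (intro sig_run_conjugates_shift) (auto elim: indices_in_mono)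
  have "indices_in (Suc q) (Suc r) (map shift H)"
    using assms by (simp add: H_def map_shift_conj_word indices_in_conj_word)
  then have "commute (sb_rels n) [e] (map shift H)"
    using assms
    by (intro sb_separated_commute [where a = s and b = "Suc s" and c = "Suc q" and d = "Suc r"]) auto
  with conjugates_by_inverse [OF D_shift inv] D_shift have "commute (sb_rels n) (D @ [e] @ D') H"
    by (metis conjugates_compose)
  then show ?thesis
    by (simp add: H_def D_def D'_def conj_word_sig_run)
qed

lemma conj_word_commute_sep:
  assumes "pr n t s" "pr n r q" "sep t s r q" "idx e = s" "idx f = q"
  shows "commute (sb_rels n) (conj_word t s e) (conj_word r q f)"
proof -
  have "r < s \<or> t < q \<or> (s < q \<and> r < t) \<or> (q < s \<and> t < r)"
    using assms sep_iff by (simp add: pr_def)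
  then show ?thesis
  proof (elim disjE conjE)
    assume "r < s"
    then show ?thesis
      using assms by (intro conj_word_commute_disjoint) (auto simp: pr_def)
  next
    assume "t < q"
    then show ?thesis
      using assms by (intro commute_sym [OF conj_word_commute_disjoint]) (auto simp: pr_def)
  next
    assume "s < q" "r < t"
    then show ?thesis
      using assms by (intro conj_word_commute_nested) (auto simp: pr_def)
  next
    assume "q < s" "t < r"
    then show ?thesis
      using assms by (intro commute_sym [OF conj_word_commute_nested]) (auto simp: pr_def)
  qed
qed

lemma conj_word_sig_commute_x:
  assumes "1 \<le> s" "s < t" "t \<le> n"
  shows "commute (sb_rels n) (conj_word t s (Sig s)) (conj_word t s (X s))"
proof -
  have "eqv (sb_rels n) (conj_word t s (Sig s) @ conj_word t s (X s))
      (sig_run (Suc s) t @ [Sig s, X s] @ sig_run_inv (Suc s) t)"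
    using assms(3) by (rule conj_word_append)
  also have "eqv (sb_rels n) \<dots> (sig_run (Suc s) t @ [X s, Sig s] @ sig_run_inv (Suc s) t)"
    using assms sb_positive_commute [of "X s" s "Sig s" s n]
    by (intro eqv_in_context) (simp add: conjugates_def eqv.sym)
  also have "eqv (sb_rels n) \<dots> (conj_word t s (X s) @ conj_word t s (Sig s))"
    using assms(3) by (rule eqv.sym [OF conj_word_append])
  finally show ?thesis
    by (simp only: conjugates_def)
qed

lemma conj_word_inverse:
  assumes "1 \<le> s" "s < t" "t \<le> n"
  shows "inverse_words (sb_rels n) (conj_word t s (Sig s)) (conj_word t s (SigInv s))"
proof -
  have cancel: "eqv (sb_rels n) (conj_word t s e @ conj_word t s e') []"
    if "eqv (sb_rels n) [e, e'] []" for e e'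
  proof -
    have "eqv (sb_rels n) (conj_word t s e @ conj_word t s e')
        (sig_run (Suc s) t @ [e, e'] @ sig_run_inv (Suc s) t)"
      using assms(3) by (rule conj_word_append)
    also have "eqv (sb_rels n) \<dots> (sig_run (Suc s) t @ [] @ sig_run_inv (Suc s) t)"
      using that by (rule eqv_in_context)
    also have "eqv (sb_rels n) \<dots> []"
      using assms sig_run_inverse [of "Suc s" t n] by (simp add: inverse_words_def)
    finally show ?thesis .
  qed
  show ?thesis
    using assms sb_sigma_inverse [of s n] by (auto simp: inverse_words_def intro!: cancel)
qed

lemma conj_word_conjugates_outer_Suc:
  assumes "c \<in> {Sig, X}" "1 \<le> r" "r < s" "s < n"
  shows "conjugates (sb_rels n) (conj_word s r (Sig r)) (conj_word (Suc s) r (c r)) [c s]"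
proof -
  obtain m where s: "s = Suc m" using assms by (cases s) auto
  define E E' where "E = sig_run r m" and "E' = sig_run_inv r m"
  have "commute (sb_rels n) E [Sig s]" "commute (sb_rels n) E [SigInv s]"
    using assms s unfolding E_def
    by (auto intro!: sb_separated_commute [where a = r and b = m and c = s and d = "Suc s"])
  moreover have "conjugates (sb_rels n) E (conj_word s r (c r)) [c m]"
    using assms s conjugates_conj_word_to_letter [of c r m n] by (simp add: E_def)
  ultimately have "conjugates (sb_rels n) E
      ([Sig s] @ conj_word s r (c r) @ [SigInv s]) ([Sig s] @ [c m] @ [SigInv s])"
    by (intro conjugates_append)
  moreover have "conjugates (sb_rels n) [Sig m] ([Sig s] @ [c m] @ [SigInv s]) [c s]"
    using assms s sb_braid_conjugate [of c m n] by simp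
  moreover have "commute (sb_rels n) E' [c s]"
    using assms s unfolding E'_def
    by (auto intro!: sb_separated_commute [where a = r and b = m and c = s and d = "Suc s"])
  ultimately have "conjugates (sb_rels n) (E' @ [Sig m] @ E)
      ([Sig s] @ conj_word s r (c r) @ [SigInv s]) [c s]"
    by (metis conjugates_compose)
  moreover have "eqv (sb_rels n) (E' @ [Sig m] @ E) (conj_word s r (Sig r))"
    using assms s conj_word_eqv_alt [of Sig r m n] by (simp add: E_def E'_def)
  ultimately show ?thesis
    using assms by (simp add: conj_word_Suc conjugates_eqv)
qed

lemma conj_word_conjugates_upper_Suc:
  assumes "c \<in> {Sig, X}" "1 \<le> r" "r < s" "s < n"
  shows "conjugates (sb_rels n) (conj_word (Suc s) r (Sig r)) [c s] (conj_word s r (c r))"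
proof -
  obtain m where s: "s = Suc m" using assms by (cases s) auto
  define E E' where "E = sig_run r m" and "E' = sig_run_inv r m"
  have E_commute: "commute (sb_rels n) E [SigInv s]" "commute (sb_rels n) E [c s]"
    using assms s unfolding E_def
    by (auto intro!: sb_separated_commute [where a = r and b = m and c = s and d = "Suc s"])
  have E'_commute: "commute (sb_rels n) E' [Sig s]"
    using assms s unfolding E'_def
    by (auto intro!: sb_separated_commute [where a = r and b = m and c = s and d = "Suc s"])
  have "eqv (sb_rels n) (E' @ [Sig s, Sig m, SigInv s] @ E) (E' @ [Sig s, Sig m] @ E @ [SigInv s])"
    using eqv_in_context [OF E_commute(1) [unfolded conjugates_def], of "E' @ [Sig s, Sig m]" "[]"]
    by (simp add: eqv.sym)
  also have "eqv (sb_rels n) \<dots> ([Sig s] @ E' @ [Sig m] @ E @ [SigInv s])"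
    using eqv_in_context [OF E'_commute [unfolded conjugates_def], of "[]" "[Sig m] @ E @ [SigInv s]"]
    by simp
  also have "eqv (sb_rels n) \<dots> (conj_word (Suc s) r (Sig r))"
    using assms s eqv_in_context [OF conj_word_eqv_alt [of Sig r m n], of "[Sig s]" "[SigInv s]"]
    by (simp add: E_def E'_def conj_word_Suc)
  finally have conjugator: "eqv (sb_rels n) (E' @ [Sig s, Sig m, SigInv s] @ E)
    (conj_word (Suc s) r (Sig r))" .
  have "conjugates (sb_rels n) [Sig s, Sig m, SigInv s] [c s] [c m]"
    using assms s sb_braid_down_conjugate [of c m n] by simp
  moreover have "conjugates (sb_rels n) E' [c m] (conj_word s r (c r))"
    using assms s conjugates_conj_word_to_letter [of c r m n] sig_run_inverse [of r m n]
    by (auto simp: E_def E'_def intro: conjugates_by_inverse)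
  ultimately have "conjugates (sb_rels n) (E' @ [Sig s, Sig m, SigInv s] @ E)
      [c s] (conj_word s r (c r))"
    using E_commute(2) by (metis conjugates_compose)
  then show ?thesis
    using conjugator by (rule conjugates_eqv) simp_all
qed

lemma conj_word_conjugates_lower:
  assumes "idx e = r" "1 \<le> r" "r < s" "s < t" "t \<le> n"
  shows "conjugates (sb_rels n) (conj_word t s (Sig s)) (conj_word s r e) (conj_word t r e)"
proof -
  define D D' where "D = sig_run (Suc s) t" and "D' = sig_run_inv (Suc s) t"
  have "commute (sb_rels n) D' (conj_word s r e)"
    using assms unfolding D'_def
    by (intro sb_separated_commute [where a = "Suc s" and b = t and c = r and d = s])
      (auto simp: indices_in_conj_word)
  moreover have "conjugates (sb_rels n) [Sig s] (conj_word s r e) (conj_word (Suc s) r e)"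
    using assms conjugates_by_invertible [OF sb_sigma_inverse [of s n]] by (simp add: conj_word_Suc)
  moreover have "conjugates (sb_rels n) D (conj_word (Suc s) r e) (conj_word t r e)"
    using assms conjugates_by_invertible [OF sig_run_inverse [of "Suc s" t n]]
    by (simp add: D_def D'_def conj_word_split [of r "Suc s" t])
  ultimately have "conjugates (sb_rels n) (D @ [Sig s] @ D') (conj_word s r e) (conj_word t r e)"
    by (metis conjugates_compose)
  then show ?thesis
    by (simp add: D_def D'_def conj_word_sig_run)
qed

lemma conj_word_conjugates_outer:
  assumes "c \<in> {Sig, X}" "1 \<le> r" "r < s" "s < t" "t \<le> n"
  shows "conjugates (sb_rels n) (conj_word s r (Sig r)) (conj_word t r (c r)) (conj_word t s (c s))"
proof -
  define A D D' where
    "A = conj_word s r (Sig r)" and "D = sig_run (Suc s) t" and "D' = sig_run_inv (Suc s) t"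
  have "commute (sb_rels n) A D" "commute (sb_rels n) A D'"
    using assms unfolding A_def D_def D'_def
    by (auto intro!: sb_separated_commute [where a = r and b = s and c = "Suc s" and d = t]
      simp: indices_in_conj_word)
  moreover have "conjugates (sb_rels n) A (conj_word (Suc s) r (c r)) [c s]"
    using assms unfolding A_def by (intro conj_word_conjugates_outer_Suc) auto
  ultimately have "conjugates (sb_rels n) A (D @ conj_word (Suc s) r (c r) @ D') (D @ [c s] @ D')"
    by (intro conjugates_append)
  then show ?thesis
    using assms
    by (simp add: A_def D_def D'_def conj_word_split [of r "Suc s" t] conj_word_sig_run [of t s])
qed

lemma conj_word_conjugates_upper:
  assumes "c \<in> {Sig, X}" "1 \<le> r" "r < s" "s < t" "t \<le> n"
  shows "conjugates (sb_rels n) (conj_word t r (Sig r)) (conj_word t s (c s)) (conj_word s r (c r))"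
proof -
  define D D' where "D = sig_run (Suc s) t" and "D' = sig_run_inv (Suc s) t"
  have "conjugates (sb_rels n) D' (conj_word t s (c s)) [c s]"
    using assms conjugates_to_conj_word [of t n s "c s"] sig_run_inverse [of "Suc s" t n]
    unfolding D_def D'_def by (auto intro: conjugates_by_inverse)
  moreover have "conjugates (sb_rels n) (conj_word (Suc s) r (Sig r)) [c s] (conj_word s r (c r))"
    using assms by (intro conj_word_conjugates_upper_Suc) auto
  moreover have "commute (sb_rels n) D (conj_word s r (c r))"
    using assms unfolding D_def
    by (intro sb_separated_commute [where a = "Suc s" and b = t and c = r and d = s])
      (auto simp: indices_in_conj_word)
  ultimately have "conjugates (sb_rels n) (D @ conj_word (Suc s) r (Sig r) @ D')
      (conj_word t s (c s)) (conj_word s r (c r))"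
    by (metis conjugates_compose)
  then show ?thesis
    using assms by (simp add: D_def D'_def conj_word_split [of r "Suc s" t])
qed

lemma phi_append: "phi (u @ v) = phi u @ phi v"
  by (simp add: phi_def)

lemma phi_rel:
  assumes "(x, y) \<in> bk_rels n"
  shows "eqv (sb_rels n) (phi x) (phi y)"
  using assms unfolding bk_rels_def
  using conj_word_inverse [unfolded inverse_words_def]
  by (elim UnE; clarsimp simp: phi_def pr_def conjugates_def [symmetric])
    (auto intro: conj_word_commute_sep [unfolded pr_def] conj_word_conjugates_lower
      conj_word_conjugates_outer conj_word_conjugates_upper conj_word_sig_commute_x)

section \<open>The inverse homomorphism\<close>

fun bk_letter :: "sbgen \<Rightarrow> bkgen" where
  "bk_letter (Sig i) = A (Suc i) i"
| "bk_letter (SigInv i) = Ainv (Suc i) i"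
| "bk_letter (X i) = B (Suc i) i"

lemma phi_map_bk_letter: "phi (map bk_letter u) = u"
proof -
  have "img (bk_letter e) = [e]" for e
    by (cases e) (simp_all add: conj_word_def)
  then show ?thesis
    by (induction u) (simp_all add: phi_def)
qed

lemma set_map_bk_letter: "set u \<subseteq> sb_gens n \<Longrightarrow> set (map bk_letter u) \<subseteq> bk_gens n"
  by (auto simp: sb_gens_def bk_gens_def)

lemma sep_adjacent: "1 < \<bar>int i - int j\<bar> \<Longrightarrow> sep (Suc i) i (Suc j) j"
  by (subst sep_iff) auto

lemma bk_inverse:
  "1 \<le> s \<Longrightarrow> s < t \<Longrightarrow> t \<le> n \<Longrightarrow> inverse_words (bk_rels n) [A t s] [Ainv t s]"
  by (auto simp: inverse_words_def bk_rels_def pr_def intro!: eqv_of_rel)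

lemma bk_band_triangle:
  assumes "1 \<le> r" "r < s" "s < t" "t \<le> n"
  shows "eqv (bk_rels n) [A t s, A s r] [A t r, A t s]" "eqv (bk_rels n) [A t r, A t s] [A s r, A t r]"
  using assms by (auto simp: bk_rels_def intro!: eqv_of_rel)

lemma bk_braid:
  assumes "1 \<le> r" "r < s" "s < t" "t \<le> n"
  shows "conjugates (bk_rels n) [A s r, A t s] [A s r] [A t s]"
proof -
  have "conjugates (bk_rels n) [A t s] [A s r] [A t r]"
    using bk_band_triangle [OF assms] by (simp add: conjugates_def)
  moreover have "conjugates (bk_rels n) [A s r] [A t r] [A t s]"
    using bk_band_triangle [OF assms] eqv.sym eqv.trans unfolding conjugates_def
    by (metis append_Cons append_Nil)
  ultimately show ?thesis
    using conjugates_compose [of _ "[A t s]" "[A s r]" "[A t r]" "[A s r]" "[A t s]"] by simp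
qed

lemma bk_braid_x:
  assumes "1 \<le> r" "r < s" "s < t" "t \<le> n"
  shows "conjugates (bk_rels n) [A s r, A t s] [B s r] [B t s]"
proof -
  have "conjugates (bk_rels n) [A t s] [B s r] [B t r]" "conjugates (bk_rels n) [A s r] [B t r] [B t s]"
    using assms by (auto simp: conjugates_def bk_rels_def intro!: eqv_of_rel)
  then show ?thesis
    using conjugates_compose [of _ "[A t s]"] by fastforce
qed

lemma bk_braid_down_x:
  assumes "1 \<le> r" "r < s" "s < t" "t \<le> n"
  shows "conjugates (bk_rels n) [A t s, A s r] [B t s] [B s r]"
proof -
  have "commute (bk_rels n) [A t s] [B t s]"
    "conjugates (bk_rels n) [A t r] [B t s] [B s r]"
    using assms by (auto simp: conjugates_def bk_rels_def pr_def intro!: eqv_of_rel)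
  then have "conjugates (bk_rels n) [A t r, A t s] [B t s] [B s r]"
    using conjugates_compose [of _ "[A t s]"] by fastforce
  then show ?thesis
    using bk_band_triangle(1) [OF assms] by (rule conjugates_eqv [OF _ eqv.sym]) simp_all
qed

lemma bk_letter_rel:
  assumes "(x, y) \<in> sb_rels n"
  shows "eqv (bk_rels n) (map bk_letter x) (map bk_letter y)"
  using assms unfolding sb_rels_def
  by (elim UnE; clarsimp;
      (intro bk_braid [unfolded conjugates_def, simplified]
        bk_braid_x [unfolded conjugates_def, simplified]
        bk_braid_down_x [unfolded conjugates_def, simplified])?;
      auto simp: bk_rels_def pr_def sep_adjacent intro: eqv_of_rel eqv.sym [OF eqv_of_rel])

lemma map_bk_letter_conj_word:
  assumes "1 \<le> s" "s < t" "t \<le> n"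
  shows "eqv (bk_rels n) (map bk_letter (conj_word t s (Sig s))) [A t s]
    \<and> eqv (bk_rels n) (map bk_letter (conj_word t s (SigInv s))) [Ainv t s]
    \<and> eqv (bk_rels n) (map bk_letter (conj_word t s (X s))) [B t s]"
  using Suc_leI [OF assms(2)] assms(3)
proof (induction t rule: dec_induct)
  case base
  then show ?case by (simp add: conj_word_def)
next
  case (step k)
  define P P' where "P = [A (Suc k) k]" and "P' = [Ainv (Suc k) k]"
  have inv: "inverse_words (bk_rels n) P P'"
    using assms step by (simp add: P_def P'_def bk_inverse)
  have extend: "eqv (bk_rels n) (map bk_letter (conj_word (Suc k) s e)) [g']"
    if "eqv (bk_rels n) (map bk_letter (conj_word k s e)) [g]" "conjugates (bk_rels n) P [g] [g']"
    for e g g'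
  proof -
    have "map bk_letter (conj_word (Suc k) s e) = P @ map bk_letter (conj_word k s e) @ P'"
      using step by (simp add: P_def P'_def conj_word_Suc)
    also have "eqv (bk_rels n) \<dots> (P @ [g] @ P')"
      using that(1) by (rule eqv_in_context)
    also have "eqv (bk_rels n) \<dots> [g']"
      using that(2) inv by (rule eqv_conj_of_conjugates)
    finally show ?thesis .
  qed
  have A_step: "conjugates (bk_rels n) P [A k s] [A (Suc k) s]"
    and B_step: "conjugates (bk_rels n) P [B k s] [B (Suc k) s]"
    using assms step by (auto simp: P_def conjugates_def bk_rels_def intro!: eqv_of_rel)
  have "conjugates (bk_rels n) P [Ainv k s] [Ainv (Suc k) s]"
    using assms step by (intro conjugates_inverse_words [OF A_step] bk_inverse) auto
  with A_step B_step step show ?case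
    by (auto intro: extend)
qed

lemma map_bk_letter_img: "g \<in> bk_gens n \<Longrightarrow> eqv (bk_rels n) (map bk_letter (img g)) [g]"
  using map_bk_letter_conj_word by (auto simp: bk_gens_def)

lemma map_bk_letter_phi: "set w \<subseteq> bk_gens n \<Longrightarrow> eqv (bk_rels n) (map bk_letter (phi w)) w"
proof (induction w)
  case (Cons g w)
  then have "eqv (bk_rels n) (map bk_letter (img g) @ map bk_letter (phi w)) ([g] @ w)"
    by (intro eqv_append map_bk_letter_img) auto
  then show ?case by (simp add: phi_def)
qed (simp add: phi_def)

theorem theorem4p1:
  fixes n :: nat
  assumes "n \<ge> 2"
  shows "(\<forall>w1 w2. set w1 \<subseteq> bk_gens n \<longrightarrow> set w2 \<subseteq> bk_gens n \<longrightarrow>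
            (eqv (bk_rels n) w1 w2 \<longleftrightarrow> eqv (sb_rels n) (phi w1) (phi w2)))
       \<and> (\<forall>u. set u \<subseteq> sb_gens n \<longrightarrow>
            (\<exists>w. set w \<subseteq> bk_gens n \<and> eqv (sb_rels n) (phi w) u))"
proof (rule eqv_iso_of_inverse_homs)
  show "eqv (sb_rels n) (phi u) (phi v)" if "eqv (bk_rels n) u v" for u v
    using phi_append phi_rel that by (rule eqv_hom)
  show "eqv (bk_rels n) (map bk_letter u) (map bk_letter v)" if "eqv (sb_rels n) u v" for u v
    using map_append bk_letter_rel that by (rule eqv_hom)
qed (use map_bk_letter_phi phi_map_bk_letter set_map_bk_letter in auto)

end
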